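(* Let $E$ be an IL FS encoder with $s$ states and Kraft matrix $K$, and let $L_{\max}=\max_{z\in\mathcal{Z},x\in\mathcal{X}}L[f(z,x)]$. Then for every positive integer $\ell$ and all $z,z'\in\mathcal{Z}$, $$[K^\ell]_{zz'}=\sum_{\{x^\ell\in\mathcal{X}^\ell:\ g(z,x^\ell)=z'\}}2^{-L[f(z,x^\ell)]}\le 1+\ell L_{\max},$$ and consequently, for every $z\in\mathcal{Z}$, $$\sum_{x^\ell\in\mathcal{X}^\ell}2^{-L[f(z,x^\ell)]}\le s(1+\ell L_{\max}).$$
   Context: A finite-state (FS) encoder is a quintuple $E=(\mathcal{X},\mathcal{Y},\mathcal{Z},f,g)$, where $\mathcal{X}$ is a finite source alphabet of size $\alpha$, $\mathcal{Y}$ is a finite set of binary strings (possibly containing the empty string, of length $0$), $\mathcal{Z}$ is a finite set of $s$ states, $f:\mathcal{Z}\times\mathcal{X}\to\mathcal{Y}$ is the output function and $g:\mathcal{Z}\times\mathcal{X}\to\mathcal{Z}$ is the next-state function. For $z\in\mathcal{Z}$ and $x^n=(x_1,\dots,x_n)\in\mathcal{X}^n$, set $z_1=z$, $z_{i+1}=g(z_i,x_i)$; write $g(z,x^n)=z_{n+1}$ and let $f(z,x^n)$ denote the binary string obtained by concatenating $f(z_1,x_1),\dots,f(z_n,x_n)$; its length is $L[f(z,x^n)]=\sum_{i=1}^n L[f(z_i,x_i)]$, where $L(\cdot)$ denotes the length of a binary string. The encoder is information lossless (IL) if for every $z\in\mathcal{Z}$ and every $n\ge1$, the map $x^n\mapsto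 (f(z,x^n),g(z,x^n))$ is injective on $\mathcal{X}^n$. The Kraft matrix of $E$ is the $s\times s$ nonnegative matrix $K$ with entries $K_{zz'}=\sum_{\{x\in\mathcal{X}:\ g(z,x)=z'\}}2^{-L[f(z,x)]}$ (an empty sum is $0$). *)

theory Defs
  imports "HOL-Analysis.Analysis"
begin

text \<open>A finite-state encoder: source alphabet = finite type 'x, states = finite type 'z,
  output function f (binary strings as bool lists), next-state function g.\<close>

fun fs_state :: "('z \<Rightarrow> 'x \<Rightarrow> 'z) \<Rightarrow> 'z \<Rightarrow> 'x list \<Rightarrow> 'z" where
  "fs_state g z [] = z"
| "fs_state g z (x # xs) = fs_state g (g z x) xs"

fun fs_out :: "('z \<Rightarrow> 'x \<Rightarrow> bool list) \<Rightarrow> ('z \<Rightarrow> 'x \<Rightarrow> 'z) \<Rightarrow> 'z \<Rightarrow> 'x list \<Rightarrow> bool list" where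
  "fs_out f g z [] = []"
| "fs_out f g z (x # xs) = f z x @ fs_out f g (g z x) xs"

definition info_lossless :: "('z \<Rightarrow> 'x \<Rightarrow> bool list) \<Rightarrow> ('z \<Rightarrow> 'x \<Rightarrow> 'z) \<Rightarrow> bool" where
  "info_lossless f g \<longleftrightarrow>
     (\<forall>z n. n \<ge> 1 \<longrightarrow> inj_on (\<lambda>xs. (fs_out f g z xs, fs_state g z xs)) {xs. length xs = n})"

definition kraft_matrix :: "('z::finite \<Rightarrow> 'x::finite \<Rightarrow> bool list) \<Rightarrow> ('z \<Rightarrow> 'x \<Rightarrow> 'z) \<Rightarrow> real^'z^'z" where
  "kraft_matrix f g = (\<chi> z z'. \<Sum>x\<in>{x. g z x = z'}. 2 powr (- real (length (f z x))))"

fun mat_pow :: "real^'n^'n \<Rightarrow> nat \<Rightarrow> real^'n^'n" where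
  "mat_pow A 0 = mat 1"
| "mat_pow A (Suc n) = mat_pow A n ** A"

definition L_max :: "('z::finite \<Rightarrow> 'x::finite \<Rightarrow> bool list) \<Rightarrow> nat" where
  "L_max f = Max {length (f z x) | z x. True}"

end

(* Expanding the matrix power, [K^l]_zz' is the sum of 2^-L[f(z,x^l)] over the input words
   of length l that drive z to z'. With the final state fixed, information losslessness makes
   the output map injective on these words, and every output has length at most l * L_max.
   The binary words of any one length n carry total weight 2^n * 2^-n = 1, so distinct outputs
   weigh at most the number of possible lengths, 1 + l * L_max. Summing over the s final states
   gives the second bound. *)

theory Submission
  imports Defs
begin

abbreviation kraft_weight :: "bool list \<Rightarrow> real" where
  "kraft_weight w \<equiv> 2 powr (- real (length w))"

lemma finite_lists_length_le_UNIV: "finite {xs :: 'a::finite list. length xs \<le> n}"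
  using finite_lists_length_le[of "UNIV :: 'a set" n] by simp

lemma sum_lists_length_Suc:
  fixes F :: "'a::finite list \<Rightarrow> 'b::comm_monoid_add"
  shows "(\<Sum>xs | length xs = Suc n \<and> P xs. F xs)
       = (\<Sum>x\<in>UNIV. \<Sum>ys | length ys = n \<and> P (x # ys). F (x # ys))"
proof -
  let ?S = "SIGMA x:UNIV. {ys. length ys = n \<and> P (x # ys)}"
  have "{xs. length xs = Suc n \<and> P xs} = (\<lambda>(x, ys). x # ys) ` ?S"
    by (auto simp: length_Suc_conv image_iff)
  moreover have "inj_on (\<lambda>(x, ys). x # ys) ?S"
    by (auto simp: inj_on_def)
  moreover have "finite ?S"
    by (intro finite_SigmaI) (auto intro: finite_subset[OF _ finite_list_length])
  moreover have "(\<Sum>x\<in>UNIV. \<Sum>ys | length ys = n \<and> P (x # ys). F (x # ys)) = (\<Sum>(x, ys)\<in>?S. F (x # ys))"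
    by (rule sum.Sigma) (auto intro: finite_subset[OF _ finite_list_length])
  ultimately show ?thesis
    by (simp add: sum.reindex case_prod_unfold)
qed

lemma sum_kraft_weight_length_le: "(\<Sum>w | length w \<le> N. kraft_weight w) = real N + 1"
proof -
  have length_class: "(\<Sum>w | length w = n. kraft_weight w) = 1" for n
  proof -
    have "card {w :: bool list. length w = n} = 2 ^ n"
      using card_lists_length_eq[of "UNIV :: bool set" n] by simp
    then have "(\<Sum>w | length w = n. kraft_weight w) = 2 ^ n * 2 powr (- real n)"
      by simp
    also have "\<dots> = 1"
      by (simp add: powr_minus powr_realpow)
    finally show ?thesis .
  qed
  have "(\<Sum>w | length w \<le> N. kraft_weight w)
      = (\<Sum>n\<in>{..N}. \<Sum>w\<in>{w \<in> {w. length w \<le> N}. length w = n}. kraft_weight w)"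
    by (rule sum.group[symmetric]) (auto simp: finite_lists_length_le_UNIV)
  also have "\<dots> = (\<Sum>n\<in>{..N}. \<Sum>w | length w = n. kraft_weight w)"
    by (intro sum.cong) auto
  also have "\<dots> = (\<Sum>n\<in>{..N}. 1)"
    by (intro sum.cong refl length_class)
  finally show ?thesis
    by simp
qed

lemma sum_kraft_weight_inj_le:
  assumes "finite S" "inj_on c S" "\<And>s. s \<in> S \<Longrightarrow> length (c s) \<le> N"
  shows "(\<Sum>s\<in>S. kraft_weight (c s)) \<le> real N + 1"
proof -
  have "(\<Sum>s\<in>S. kraft_weight (c s)) = (\<Sum>w\<in>c ` S. kraft_weight w)"
    using assms(2) by (simp add: sum.reindex)
  also have "\<dots> \<le> (\<Sum>w | length w \<le> N. kraft_weight w)"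
    using assms(3) by (intro sum_mono2) (auto simp: finite_lists_length_le_UNIV)
  finally show ?thesis
    by (simp add: sum_kraft_weight_length_le)
qed

lemma length_le_L_max: "length (f z x) \<le> L_max f"
proof -
  have "{length (f z x) | z x. True} = (\<lambda>(z, x). length (f z x)) ` UNIV"
    by auto
  then show ?thesis
    unfolding L_max_def by (intro Max_ge) auto
qed

lemma length_fs_out_le: "length (fs_out f g z xs) \<le> length xs * L_max f"
proof (induction xs arbitrary: z)
  case (Cons x xs)
  show ?case
    using length_le_L_max[of f z x] Cons[of "g z x"] by simp
qed simp

lemma info_lossless_inj_on_fs_out:
  assumes "info_lossless f g"
  shows "inj_on (fs_out f g z) {xs. length xs = n \<and> fs_state g z xs = z'}"
proof (cases "n = 0")
  case True
  then show ?thesis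
    by (simp add: inj_on_def)
next
  case False
  then have "inj_on (\<lambda>xs. (fs_out f g z xs, fs_state g z xs)) {xs. length xs = n}"
    using assms by (simp add: info_lossless_def)
  then show ?thesis
    by (auto simp: inj_on_def)
qed

lemma mat_pow_Suc_left: "mat_pow A (Suc n) = A ** mat_pow A n"
proof (induction n)
  case (Suc n)
  have "mat_pow A (Suc (Suc n)) = (A ** mat_pow A n) ** A"
    by (metis Suc.IH mat_pow.simps(2))
  also have "\<dots> = A ** mat_pow A (Suc n)"
    by (simp add: matrix_mul_assoc)
  finally show ?case .
qed simp

lemma mat_pow_kraft_matrix:
  "mat_pow (kraft_matrix f g) n $ z $ z'
     = (\<Sum>xs | length xs = n \<and> fs_state g z xs = z'. kraft_weight (fs_out f g z xs))"
proof (induction n arbitrary: z)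
  case 0
  have "{xs. length xs = 0 \<and> fs_state g z xs = z'} = (if z = z' then {[]} else {})"
    by auto
  then show ?case
    by (simp add: mat_def)
next
  case (Suc n)
  define P where "P w = mat_pow (kraft_matrix f g) n $ w $ z'" for w
  have "mat_pow (kraft_matrix f g) (Suc n) $ z $ z'
      = (\<Sum>w\<in>UNIV. \<Sum>x | g z x = w. kraft_weight (f z x) * P (g z x))"
    unfolding mat_pow_Suc_left by (simp add: matrix_matrix_mult_def kraft_matrix_def P_def sum_distrib_right)
  also have "\<dots> = (\<Sum>x\<in>UNIV. kraft_weight (f z x) * P (g z x))"
    using sum.group[of UNIV UNIV "g z" "\<lambda>x. kraft_weight (f z x) * P (g z x)"] by simp
  also have "\<dots> = (\<Sum>x\<in>UNIV. \<Sum>ys | length ys = n \<and> fs_state g (g z x) ys = z'.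
                     kraft_weight (f z x @ fs_out f g (g z x) ys))"
    by (simp add: P_def Suc sum_distrib_left powr_add[symmetric] add.commute)
  also have "\<dots> = (\<Sum>xs | length xs = Suc n \<and> fs_state g z xs = z'. kraft_weight (fs_out f g z xs))"
    by (simp add: sum_lists_length_Suc)
  finally show ?case .
qed

lemma sum_kraft_weight_fs_out_paths_le:
  assumes "info_lossless f g"
  shows "(\<Sum>xs | length xs = l \<and> fs_state g z xs = z'. kraft_weight (fs_out f g z xs))
           \<le> 1 + real l * real (L_max f)"
proof -
  have "finite {xs. length xs = l \<and> fs_state g z xs = z'}"
    by (auto intro: finite_subset[OF _ finite_list_length])
  then have "(\<Sum>xs | length xs = l \<and> fs_state g z xs = z'. kraft_weight (fs_out f g z xs))
               \<le> real (l * L_max f) + 1"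
    by (rule sum_kraft_weight_inj_le[OF _ info_lossless_inj_on_fs_out[OF assms]])
      (use length_fs_out_le[of f g z] in auto)
  then show ?thesis
    by simp
qed

lemma sum_kraft_weight_fs_out_le:
  fixes f :: "'z::finite \<Rightarrow> 'x::finite \<Rightarrow> bool list"
  assumes "info_lossless f g"
  shows "(\<Sum>xs | length xs = l. kraft_weight (fs_out f g z xs))
           \<le> real CARD('z) * (1 + real l * real (L_max f))"
proof -
  have "(\<Sum>xs | length xs = l. kraft_weight (fs_out f g z xs))
      = (\<Sum>z'\<in>UNIV. \<Sum>xs | length xs = l \<and> fs_state g z xs = z'. kraft_weight (fs_out f g z xs))"
    using sum.group[of "{xs. length xs = l}" UNIV "fs_state g z" "\<lambda>xs. kraft_weight (fs_out f g z xs)"]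
    by (simp add: finite_list_length)
  also have "\<dots> \<le> (\<Sum>z'\<in>(UNIV :: 'z set). 1 + real l * real (L_max f))"
    by (rule sum_mono) (rule sum_kraft_weight_fs_out_paths_le[OF assms])
  finally show ?thesis
    by simp
qed

theorem mainTheorem2:
  fixes f :: "'z::finite \<Rightarrow> 'x::finite \<Rightarrow> bool list" and g :: "'z \<Rightarrow> 'x \<Rightarrow> 'z" and l :: nat
  assumes "info_lossless f g"
    and "l \<ge> 1"
  shows "(\<forall>z z'. mat_pow (kraft_matrix f g) l $ z $ z'
              = (\<Sum>xs\<in>{xs. length xs = l \<and> fs_state g z xs = z'}. 2 powr (- real (length (fs_out f g z xs))))
          \<and> (\<Sum>xs\<in>{xs. length xs = l \<and> fs_state g z xs = z'}. 2 powr (- real (length (fs_out f g z xs))))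
              \<le> 1 + real l * real (L_max f))
       \<and> (\<forall>z. (\<Sum>xs\<in>{xs. length xs = l}. 2 powr (- real (length (fs_out f g z xs))))
              \<le> real CARD('z) * (1 + real l * real (L_max f)))"
  using mat_pow_kraft_matrix sum_kraft_weight_fs_out_paths_le[OF assms(1)] sum_kraft_weight_fs_out_le[OF assms(1)]
  by blast

end
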